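(* Let $\ell,m$ be positive integers and let $\mu\in\mathcal{P}^{\ell,\ell+m-1}$. Define $\tilde\mu:[\ell]\to[\ell]$ by $\tilde\mu(i)=t(i,\mu(i))$, where $t(r,s)=s$ if $s<r$, $t(r,s)=r$ if $r\leq s\leq m+r-1$, and $t(r,s)=s-m+1$ if $s>m+r-1$. Then $\mu\in\mathcal{P}^\ell(\Omega_m)$ if and only if for every $i\in[\ell]$: (i) if $\tilde\mu(i)>i$ then $\tilde\mu(\tilde\mu(i))>i$; (ii) if $\tilde\mu(i)<i$ then $\tilde\mu(\tilde\mu(i))<i$.
   Context: For a positive integer $n$, $[n]=\{1,\dots,n\}$. $\mathcal{P}^{n,k}$ is the set of partitions $\mu=(\mu_1\geq\dots\geq\mu_n>0)$ with exactly $n$ parts and $\mu_1\leq k$, regarded as weakly decreasing functions $[n]\to[k]$, $\mu(i)=\mu_i$. The map $\tau_k:\mathcal{P}^{n,k}\to\mathcal{P}^{n,k}$ is $\tau_k(\mu_1,\dots,\mu_n)=(k+1-\mu_n,\dots,k+1-\mu_1)$. For $\mu$ with $n-1$ parts and $0<j\leq\mu_{n-1}$, $(\mu:j)$ denotes the partition $(\mu_1,\dots,\mu_{n-1},j)$. Fix $m\in\mathbb{Z}^+$ and let $\Omega_m=\{(j):1\leq j\leq m\}=\mathcal{P}^{1,m}$. Define $\mathcal{P}^1(\Omega_m)=\Omega_m$ and, for $\ell\geq2$, $\mathcal{P}^\ell_{\rm d}(\Omega_m)=\{(\nu:j)\in\mathcal{P}^{\ell,\ell+m-1}:\nu\in\mathcal{P}^{\ell-1}(\Omega_m),\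 1\leq j\leq\nu_{\ell-1}\}$ and $\mathcal{P}^\ell(\Omega_m)=\mathcal{P}^\ell_{\rm d}(\Omega_m)\cup\tau_{\ell+m-1}(\mathcal{P}^\ell_{\rm d}(\Omega_m))$. *)

theory Defs
  imports Main
begin

(* A partition mu = (mu_1 >= ... >= mu_n > 0) is represented as the list [mu_1,...,mu_n];
   mu(i) = mu ! (i - 1) for i in {1..n}. *)

definition Pnk :: "nat \<Rightarrow> nat \<Rightarrow> nat list set" where
  "Pnk n k = {mu. length mu = n \<and> sorted_wrt (\<ge>) mu \<and> (\<forall>x\<in>set mu. 0 < x \<and> x \<le> k)}"

definition tau :: "nat \<Rightarrow> nat list \<Rightarrow> nat list" where
  "tau k mu = rev (map (\<lambda>x. k + 1 - x) mu)"

definition Omega :: "nat \<Rightarrow> nat list set" where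
  "Omega m = {[j] | j. 1 \<le> j \<and> j \<le> m}"

fun POm :: "nat \<Rightarrow> nat \<Rightarrow> nat list set" where
  "POm m 0 = {}"
| "POm m (Suc 0) = Omega m"
| "POm m (Suc (Suc l)) =
     (let L = Suc (Suc l);
          D = {nu @ [j] | nu j. nu \<in> POm m (Suc l) \<and> 1 \<le> j \<and> j \<le> last nu
                                \<and> nu @ [j] \<in> Pnk L (L + m - 1)}
      in D \<union> tau (L + m - 1) ` D)"

definition tfun :: "nat \<Rightarrow> nat \<Rightarrow> nat \<Rightarrow> nat" where
  "tfun m r s = (if s < r then s else if s \<le> m + r - 1 then r else s - m + 1)"

definition mutilde :: "nat \<Rightarrow> nat list \<Rightarrow> nat \<Rightarrow> nat" where
  "mutilde m mu i = tfun m i (mu ! (i - 1))"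

end

theory Submission
  imports Defs
begin

text \<open>
  A partition lies in \<open>\<P>\<^sup>\<ell>(\<Omega>\<^sub>m)\<close> iff it or its \<open>\<tau>\<close>-dual is
  obtained from a member of \<open>\<P>\<^sup>\<ell>\<^sup>-\<^sup>1(\<Omega>\<^sub>m)\<close> by appending a part. Dualising reflects
  \<open>\<tilde>\<mu>\<close> by \<open>i \<mapsto> \<ell>+1-i\<close>, which preserves the nesting condition (i)/(ii). If the largest part
  is at most \<open>\<ell>+m-2\<close>, then \<open>\<tilde>\<mu>\<close> maps \<open>[\<ell>-1]\<close> into itself and agrees there with the map of
  the truncated partition, so the condition for \<open>\<mu>\<close> reduces to the one for the truncation.
  Finally, if both \<open>\<mu>\<close> and its dual have largest part \<open>\<ell>+m-1\<close>, then \<open>\<tilde>\<mu>(1) = \<ell>\<close> and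
  \<open>\<tilde>\<mu>(\<ell>) = 1\<close>, violating (i) at \<open>i = 1\<close>.
\<close>

definition nested :: "(nat \<Rightarrow> nat) \<Rightarrow> nat \<Rightarrow> bool" where
  "nested f l \<longleftrightarrow> (\<forall>i\<in>{1..l}. (i < f i \<longrightarrow> i < f (f i)) \<and> (f i < i \<longrightarrow> f (f i) < i))"

lemma nested_cong:
  assumes "\<And>i. i \<in> {1..l} \<Longrightarrow> f i = g i" and "f ` {1..l} \<subseteq> {1..l}"
  shows "nested f l \<longleftrightarrow> nested g l"
proof -
  have "f (f i) = g (g i)" if "i \<in> {1..l}" for i
    using assms that by (metis image_subset_iff)
  then show ?thesis
    using assms(1) unfolding nested_def by auto
qed

lemma nested_drop_last:
  assumes "f ` {1..<l} \<subseteq> {1..<l}" and "f l \<in> {1..l}"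
  shows "nested f l \<longleftrightarrow> nested f (l - 1)"
proof (cases "l = 0")
  case False
  then have "{1..l} = insert l {1..l - 1}" by auto
  moreover have "f (f l) < l" if "f l < l"
    using assms that by (metis atLeastLessThan_iff atLeastAtMost_iff image_subset_iff)
  ultimately show ?thesis
    using assms(2) unfolding nested_def by auto
qed simp

lemma nested_reflect:
  assumes "f ` {1..l} \<subseteq> {1..l}" and "nested f l"
  shows "nested (\<lambda>i. l + 1 - f (l + 1 - i)) l"
  unfolding nested_def
proof
  fix i assume i: "i \<in> {1..l}"
  let ?g = "\<lambda>i. l + 1 - f (l + 1 - i)"
  define j where "j = l + 1 - i"
  have j: "j \<in> {1..l}" and "i = l + 1 - j"
    using i unfolding j_def by auto
  moreover have "f j \<in> {1..l}" and "f (f j) \<in> {1..l}"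
    using assms(1) j by (auto simp only: image_subset_iff)
  moreover have "?g i = l + 1 - f j" and "?g (?g i) = l + 1 - f (f j)"
    using \<open>f j \<in> {1..l}\<close> unfolding j_def by auto
  moreover have "(j < f j \<longrightarrow> j < f (f j)) \<and> (f j < j \<longrightarrow> f (f j) < j)"
    using assms(2) j unfolding nested_def by blast
  ultimately show "(i < ?g i \<longrightarrow> i < ?g (?g i)) \<and> (?g i < i \<longrightarrow> ?g (?g i) < i)"
    by (simp only: atLeastAtMost_iff) linarith
qed

lemma Pnk_nth_le_hd:
  assumes "mu \<in> Pnk l K" and "i < l"
  shows "mu ! i \<le> mu ! 0"
  using assms unfolding Pnk_def
  by (cases i) (auto simp: sorted_wrt_iff_nth_less)

lemma Pnk_nth_bounds:
  assumes "mu \<in> Pnk l K" and "i < l"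
  shows "0 < mu ! i" and "mu ! i \<le> K"
  using assms nth_mem[of i mu] unfolding Pnk_def by auto

lemma tau_in_Pnk:
  assumes "mu \<in> Pnk l K"
  shows "tau K mu \<in> Pnk l K"
  using assms unfolding Pnk_def tau_def
  by (auto simp: sorted_wrt_rev sorted_wrt_map elim!: sorted_wrt_mono_rel[rotated])

lemma tau_tau:
  assumes "mu \<in> Pnk l K"
  shows "tau K (tau K mu) = mu"
  using assms unfolding Pnk_def tau_def by (auto simp: rev_map intro!: map_idI)

lemma nth_tau:
  assumes "i < length mu"
  shows "tau K mu ! i = K + 1 - mu ! (length mu - Suc i)"
  using assms unfolding tau_def by (simp add: rev_nth)

lemma tfun_reflect:
  assumes "i \<in> {1..l}" and "0 < s" and "s \<le> l + m - 1" and "0 < m"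
  shows "tfun m i (l + m - s) = l + 1 - tfun m (l + 1 - i) s"
  using assms unfolding tfun_def by auto

lemma mutilde_range:
  assumes "mu \<in> Pnk l (l + m - 1)" and "0 < m"
  shows "mutilde m mu ` {1..l} \<subseteq> {1..l}"
proof
  fix x assume "x \<in> mutilde m mu ` {1..l}"
  then obtain i where i: "i \<in> {1..l}" and x: "x = tfun m i (mu ! (i - 1))"
    unfolding mutilde_def by auto
  have "0 < mu ! (i - 1)" "mu ! (i - 1) \<le> l + m - 1"
    using Pnk_nth_bounds[OF assms(1)] i by auto
  then show "x \<in> {1..l}"
    using i assms(2) unfolding x tfun_def by auto
qed

lemma mutilde_butlast:
  assumes "0 < i" and "i < length mu"
  shows "mutilde m (butlast mu) i = mutilde m mu i"
  using assms unfolding mutilde_def by (simp add: nth_butlast)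

lemma mutilde_tau:
  assumes "mu \<in> Pnk l (l + m - 1)" and "0 < m" and "i \<in> {1..l}"
  shows "mutilde m (tau (l + m - 1) mu) i = l + 1 - mutilde m mu (l + 1 - i)"
proof -
  have len: "length mu = l"
    using assms(1) unfolding Pnk_def by simp
  have tau_entry: "tau (l + m - 1) mu ! (i - 1) = l + m - mu ! (l - i)"
    using nth_tau[of "i - 1" mu "l + m - 1"] assms(3) len by force
  have "0 < mu ! (l - i)" "mu ! (l - i) \<le> l + m - 1"
    using Pnk_nth_bounds[OF assms(1)] assms(3) by auto
  then show ?thesis
    using assms(2,3) tfun_reflect unfolding mutilde_def tau_entry by auto
qed

lemma nested_mutilde_tau:
  assumes "mu \<in> Pnk l (l + m - 1)" and "0 < m" and "nested (mutilde m mu) l"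
  shows "nested (mutilde m (tau (l + m - 1) mu)) l"
proof -
  have "nested (mutilde m (tau (l + m - 1) mu)) l \<longleftrightarrow>
      nested (\<lambda>i. l + 1 - mutilde m mu (l + 1 - i)) l"
    by (rule nested_cong[OF mutilde_tau[OF assms(1,2)]
          mutilde_range[OF tau_in_Pnk[OF assms(1)] assms(2)]])
  then show ?thesis
    using nested_reflect[OF mutilde_range[OF assms(1,2)] assms(3)] by simp
qed

lemma nested_mutilde_tau_iff:
  assumes "mu \<in> Pnk l (l + m - 1)" and "0 < m"
  shows "nested (mutilde m (tau (l + m - 1) mu)) l \<longleftrightarrow> nested (mutilde m mu) l"
  using nested_mutilde_tau[OF assms] nested_mutilde_tau[OF tau_in_Pnk[OF assms(1)] assms(2)]
    tau_tau[OF assms(1)] by auto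

lemma nested_mutilde_butlast_iff:
  assumes mu: "mu \<in> Pnk l (l + m - 1)" and "0 < m" and "mu ! 0 \<le> l + m - 2"
  shows "nested (mutilde m (butlast mu)) (l - 1) \<longleftrightarrow> nested (mutilde m mu) l"
proof -
  have len: "length mu = l"
    using mu unfolding Pnk_def by simp
  have range: "mutilde m mu ` {1..l} \<subseteq> {1..l}"
    using mutilde_range[OF mu assms(2)] .
  have below_l: "mutilde m mu i < l" if "i \<in> {1..<l}" for i
  proof -
    have "mu ! (i - 1) \<le> l + m - 2"
      using Pnk_nth_le_hd[OF mu, of "i - 1"] that assms(3) by fastforce
    then show ?thesis
      using that unfolding mutilde_def tfun_def by auto
  qed
  have below: "mutilde m mu ` {1..<l} \<subseteq> {1..<l}"
    using range below_l by fastforce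
  have "nested (mutilde m mu) l \<longleftrightarrow> nested (mutilde m mu) (l - 1)"
  proof (cases "l = 0")
    case False
    then have "mutilde m mu l \<in> {1..l}"
      using range by (auto simp: image_subset_iff)
    then show ?thesis
      using nested_drop_last[OF below] by simp
  qed simp
  also have "\<dots> \<longleftrightarrow> nested (mutilde m (butlast mu)) (l - 1)"
  proof (rule nested_cong)
    show "mutilde m mu i = mutilde m (butlast mu) i" if "i \<in> {1..l - 1}" for i
      using mutilde_butlast[of i mu m] that len by auto
    show "mutilde m mu ` {1..l - 1} \<subseteq> {1..l - 1}"
      using below by (cases l) (auto simp: atLeastLessThanSuc_atLeastAtMost)
  qed
  finally show ?thesis ..
qed

lemma nested_mutilde_hd_le:
  assumes mu: "mu \<in> Pnk l (l + m - 1)" and "2 \<le> l" and "0 < m"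
    and "nested (mutilde m mu) l"
  shows "mu ! 0 \<le> l + m - 2 \<or> tau (l + m - 1) mu ! 0 \<le> l + m - 2"
proof (rule ccontr)
  assume "\<not> ?thesis"
  moreover have len: "length mu = l"
    using mu unfolding Pnk_def by simp
  moreover have "mu ! 0 \<le> l + m - 1" "0 < mu ! (l - 1)"
    using Pnk_nth_bounds[OF mu] assms(2) by auto
  moreover have "tau (l + m - 1) mu ! 0 = l + m - mu ! (l - 1)"
    using nth_tau[of 0 mu "l + m - 1"] len assms(2) by simp
  ultimately have "mu ! 0 = l + m - 1" and "mu ! (l - 1) = 1"
    by linarith+
  then have "mutilde m mu 1 = l" and "mutilde m mu l = 1"
    using assms(2,3) unfolding mutilde_def tfun_def by auto
  moreover have "1 < mutilde m mu 1 \<longrightarrow> 1 < mutilde m mu (mutilde m mu 1)"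
    using assms(2,4) unfolding nested_def by simp
  ultimately show False
    using assms(2) by simp
qed

lemma butlast_in_Pnk_iff:
  assumes mu: "mu \<in> Pnk (Suc n) K" and "0 < n"
  shows "butlast mu \<in> Pnk n (K - 1) \<longleftrightarrow> mu ! 0 \<le> K - 1"
proof -
  have len: "length mu = Suc n" and sorted: "sorted_wrt (\<ge>) (butlast mu)"
    using mu unfolding Pnk_def by (auto simp: butlast_conv_take sorted_wrt_take)
  have hd: "butlast mu ! 0 = mu ! 0"
    using len assms(2) by (simp add: nth_butlast)
  have "\<forall>x\<in>set (butlast mu). 0 < x \<and> x \<le> K - 1" if "mu ! 0 \<le> K - 1"
  proof
    fix x assume "x \<in> set (butlast mu)"
    then obtain i where "i < n" and x: "x = mu ! i"
      using len by (auto simp: in_set_conv_nth nth_butlast)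
    then show "0 < x \<and> x \<le> K - 1"
      using Pnk_nth_bounds[OF mu] Pnk_nth_le_hd[OF mu, of i] that by auto
  qed
  moreover have "butlast mu ! 0 \<in> set (butlast mu)"
    using len assms(2) by simp
  ultimately show ?thesis
    using len sorted hd unfolding Pnk_def by auto
qed

lemma POm_subset_Pnk:
  assumes "0 < m"
  shows "POm m l \<subseteq> Pnk l (l + m - 1)"
  using assms
proof (induction m l rule: POm.induct)
  case (2 m)
  then show ?case by (auto simp: Omega_def Pnk_def)
next
  case (3 m l)
  then show ?case using tau_in_Pnk by (auto simp: Let_def)
qed simp

lemma Pnk_snoc_last:
  assumes "mu \<in> Pnk (Suc (Suc l)) K"
  obtains nu j where "mu = nu @ [j]" and "1 \<le> j" and "j \<le> last nu"
proof -
  obtain nu j where mu: "mu = nu @ [j]"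
    using assms unfolding Pnk_def by (cases mu rule: rev_cases) auto
  then obtain nu' k where nu: "nu = nu' @ [k]"
    using assms unfolding Pnk_def by (cases nu rule: rev_cases) auto
  have "1 \<le> j" and "j \<le> k"
    using assms unfolding Pnk_def mu nu by (auto simp: sorted_wrt_append)
  then show ?thesis
    using that mu nu by simp
qed

lemma mem_POm_Suc_Suc_iff:
  fixes l m :: nat
  defines "L \<equiv> Suc (Suc l)" and "K \<equiv> Suc (Suc l) + m - 1"
  assumes mu: "mu \<in> Pnk L K"
  shows "mu \<in> POm m L \<longleftrightarrow> butlast mu \<in> POm m (Suc l) \<or> butlast (tau K mu) \<in> POm m (Suc l)"
proof -
  define D where "D = {nu @ [j] | nu j. nu \<in> POm m (Suc l) \<and> 1 \<le> j \<and> j \<le> last nu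
                                        \<and> nu @ [j] \<in> Pnk L K}"
  have POm_L: "POm m L = D \<union> tau K ` D"
    unfolding L_def K_def D_def by (simp add: Let_def)
  have D_iff: "x \<in> D \<longleftrightarrow> butlast x \<in> POm m (Suc l)" if x: "x \<in> Pnk L K" for x
  proof
    assume "butlast x \<in> POm m (Suc l)"
    moreover obtain nu j where "x = nu @ [j]" "1 \<le> j" "j \<le> last nu"
      using Pnk_snoc_last x unfolding L_def by blast
    ultimately show "x \<in> D"
      using x unfolding D_def by auto
  qed (auto simp: D_def)
  have "D \<subseteq> Pnk L K"
    unfolding D_def by blast
  then have "mu \<in> tau K ` D \<longleftrightarrow> tau K mu \<in> D"
    using tau_tau[OF mu] by (auto simp: tau_tau subset_iff intro: image_eqI[of mu "tau K" "tau K mu"])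
  then show ?thesis
    unfolding POm_L using D_iff[OF mu] D_iff[OF tau_in_Pnk[OF mu]] by blast
qed

lemma mem_POm_iff_nested:
  assumes "0 < m" and "mu \<in> Pnk (Suc l) (Suc l + m - 1)"
  shows "mu \<in> POm m (Suc l) \<longleftrightarrow> nested (mutilde m mu) (Suc l)"
  using assms(2)
proof (induction l arbitrary: mu)
  case 0
  then obtain j where mu: "mu = [j]" and "0 < j" and "j \<le> m"
    unfolding Pnk_def by (auto simp: length_Suc_conv)
  then have "mutilde m mu 1 = 1"
    unfolding mutilde_def tfun_def by simp
  then show ?case
    using mu \<open>0 < j\<close> \<open>j \<le> m\<close> unfolding nested_def by (auto simp: Omega_def)
next
  case (Suc l)
  define L where "L = Suc (Suc l)"
  define K where "K = L + m - 1"
  have K: "K - 1 = Suc l + m - 1" "L + m - 2 = K - 1"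
    using assms(1) unfolding K_def L_def by auto
  have mu: "mu \<in> Pnk L K"
    using Suc.prems unfolding L_def K_def by simp
  have truncate: "butlast x \<in> POm m (Suc l) \<longleftrightarrow> x ! 0 \<le> K - 1 \<and> nested (mutilde m x) L"
    if x: "x \<in> Pnk L K" for x
  proof -
    have "butlast x \<in> POm m (Suc l) \<longleftrightarrow>
        butlast x \<in> Pnk (Suc l) (K - 1) \<and> nested (mutilde m (butlast x)) (Suc l)"
      unfolding K(1) using Suc.IH[of "butlast x"] POm_subset_Pnk[OF assms(1), of "Suc l"] by blast
    also have "\<dots> \<longleftrightarrow> x ! 0 \<le> K - 1 \<and> nested (mutilde m (butlast x)) (Suc l)"
      using butlast_in_Pnk_iff[of x "Suc l" K] x unfolding L_def by simp
    also have "\<dots> \<longleftrightarrow> x ! 0 \<le> K - 1 \<and> nested (mutilde m x) L"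
      using nested_mutilde_butlast_iff[of x L m] x assms(1) K unfolding K_def L_def by auto
    finally show ?thesis .
  qed
  have "mu \<in> POm m L \<longleftrightarrow>
      (mu ! 0 \<le> K - 1 \<and> nested (mutilde m mu) L) \<or>
      (tau K mu ! 0 \<le> K - 1 \<and> nested (mutilde m (tau K mu)) L)"
    using mem_POm_Suc_Suc_iff[of mu l m] mu truncate[OF mu] truncate[OF tau_in_Pnk[OF mu]]
    unfolding L_def K_def by simp
  also have "\<dots> \<longleftrightarrow> nested (mutilde m mu) L"
    using nested_mutilde_tau_iff[of mu L m] nested_mutilde_hd_le[of mu L m] mu assms(1) K
    unfolding K_def L_def by auto
  finally show ?case
    unfolding L_def .
qed

theorem theorem3p6:
  fixes l m :: nat and mu :: "nat list"
  assumes "0 < l" and "0 < m" and "mu \<in> Pnk l (l + m - 1)"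
  shows "mu \<in> POm m l \<longleftrightarrow>
    (\<forall>i\<in>{1..l}.
       (mutilde m mu i > i \<longrightarrow> mutilde m mu (mutilde m mu i) > i) \<and>
       (mutilde m mu i < i \<longrightarrow> mutilde m mu (mutilde m mu i) < i))"
proof -
  obtain k where "l = Suc k"
    using assms(1) gr0_implies_Suc by blast
  then show ?thesis
    using mem_POm_iff_nested[OF assms(2)] assms(3) unfolding nested_def by simp
qed

end
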